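(* Let $N\ge n\ge 1$ be integers, let $l_1,\dots,l_N>0$, and let $U=(u_{ij})_{i,j=1}^{2N}$ be a unitary $2N\times 2N$ matrix. Consider the quantum graph $\Gamma_0$ consisting of a single vertex and $N$ finite edges (loops) of lengths $l_1,\dots,l_N$, each emanating from and ending at this vertex; its Hilbert space is $\bigoplus_{j=1}^N L^2([0,l_j])$, and the Hamiltonian $H=H_U$ acts as $-\mathrm{d}^2/\mathrm{d}x^2$ on each edge, with domain consisting of all $(f_1,\dots,f_N)\in\bigoplus_j W^{2,2}([0,l_j])$ satisfying $$(U-I)\Psi+i(U+I)\Psi'=0,$$ where $\Psi=(f_1(0),f_1(l_1),f_2(0),f_2(l_2),\dots,f_N(0),f_N(l_N))^T$ and $\Psi'=(f_1'(0),-f_1'(l_1),\dots,f_N'(0),-f_N'(l_N))^T$. Suppose there is $l_0>0$ such that $l_1,\dots,l_n$ are integer multiples of $l_0$. Let $M_{\mathrm{even}}$ be the $2N\times 2n$ matrix formed by the first $2n$ columns of $U$, except that for each $j\in\{1,\dots,n\}$ the entries in positions $(2j-1,2j)$ and $(2j,2j-1)$ are replaced by $u_{2j-1,2j}-1$ and $u_{2j,2j-1}-1$, respectively. If $\mathrm{rank}\,M_{\mathrm{even}}<2n$, then the spectrum of $H_U$ contains the eigenvalues $\epsilon=4m^2\pi^2/l_0^2$, $m\in\mathbb{N}$, and the multiplicity of these eigenvalues is at least $2n-\mathrm{rank}\,M_{\mathrm{even}}$.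
   Context: The boundary condition at the vertex is the general self-adjoint vertex coupling; $\Psi$ collects the boundary values at both ends of every edge and $\Psi'$ the corresponding outward derivatives, ordered so that entries $2j-1,2j$ refer to the two ends of the $j$-th edge. *)

theory Defs
  imports "HOL-Analysis.Analysis" "Jordan_Normal_Form.Schur_Decomposition" "Jordan_Normal_Form.DL_Rank"
begin

text \<open>Edges are indexed 0-based by j < N; edge j is [0, l j].
  Boundary vectors are indexed 0-based: entries 2j, 2j+1 refer to the two ends of edge j
  (the paper's entries 2j-1, 2j for the 1-based j-th edge).\<close>

definition bvals :: "nat \<Rightarrow> (nat \<Rightarrow> real) \<Rightarrow> (nat \<Rightarrow> real \<Rightarrow> complex) \<Rightarrow> complex vec" where
  "bvals N l f = vec (2*N) (\<lambda>r. if even r then f (r div 2) 0 else f (r div 2) (l (r div 2)))"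

definition bders :: "nat \<Rightarrow> (nat \<Rightarrow> real) \<Rightarrow> (nat \<Rightarrow> real \<Rightarrow> complex) \<Rightarrow> complex vec" where
  "bders N l f' = vec (2*N) (\<lambda>r. if even r then f' (r div 2) 0 else - f' (r div 2) (l (r div 2)))"

definition is_eigenfunction ::
  "nat \<Rightarrow> (nat \<Rightarrow> real) \<Rightarrow> complex mat \<Rightarrow> real \<Rightarrow> (nat \<Rightarrow> real \<Rightarrow> complex) \<Rightarrow> bool" where
  "is_eigenfunction N l U \<epsilon> f \<longleftrightarrow>
     (\<exists>f' f''. (\<forall>j<N. \<forall>x\<in>{0..l j}.
          (f j has_vector_derivative f' j x) (at x within {0..l j}) \<and>
          (f' j has_vector_derivative f'' j x) (at x within {0..l j}) \<and>
          - f'' j x = complex_of_real \<epsilon> * f j x)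
      \<and> (U - 1\<^sub>m (2*N)) *\<^sub>v bvals N l f + \<i> \<cdot>\<^sub>v ((U + 1\<^sub>m (2*N)) *\<^sub>v bders N l f')
          = 0\<^sub>v (2*N))"

definition is_zero_on_graph :: "nat \<Rightarrow> (nat \<Rightarrow> real) \<Rightarrow> (nat \<Rightarrow> real \<Rightarrow> complex) \<Rightarrow> bool" where
  "is_zero_on_graph N l f \<longleftrightarrow> (\<forall>j<N. \<forall>x\<in>{0..l j}. f j x = 0)"

definition is_eigenvalue :: "nat \<Rightarrow> (nat \<Rightarrow> real) \<Rightarrow> complex mat \<Rightarrow> real \<Rightarrow> bool" where
  "is_eigenvalue N l U \<epsilon> \<longleftrightarrow> (\<exists>f. is_eigenfunction N l U \<epsilon> f \<and> \<not> is_zero_on_graph N l f)"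

text \<open>multiplicity (dimension of the eigenspace over \<complex>) is at least k:
  there are k eigenfunctions that are linearly independent as elements of the Hilbert space.\<close>
definition multiplicity_ge :: "nat \<Rightarrow> (nat \<Rightarrow> real) \<Rightarrow> complex mat \<Rightarrow> real \<Rightarrow> nat \<Rightarrow> bool" where
  "multiplicity_ge N l U \<epsilon> k \<longleftrightarrow>
     (\<exists>\<phi> :: nat \<Rightarrow> nat \<Rightarrow> real \<Rightarrow> complex.
        (\<forall>i<k. is_eigenfunction N l U \<epsilon> (\<phi> i)) \<and>
        (\<forall>c :: nat \<Rightarrow> complex.
           is_zero_on_graph N l (\<lambda>j x. \<Sum>i<k. c i * \<phi> i j x) \<longrightarrow> (\<forall>i<k. c i = 0)))"

definition unitary_mat :: "complex mat \<Rightarrow> bool" where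
  "unitary_mat U \<longleftrightarrow> U \<in> carrier_mat (dim_row U) (dim_row U) \<and>
     U * mat_adjoint U = 1\<^sub>m (dim_row U) \<and> mat_adjoint U * U = 1\<^sub>m (dim_row U)"

text \<open>M_even: first 2n columns of U, with entries (2j,2j+1) and (2j+1,2j) (0-based, j<n)
  decreased by 1.\<close>
definition M_even :: "nat \<Rightarrow> nat \<Rightarrow> complex mat \<Rightarrow> complex mat" where
  "M_even N n U = mat (2*N) (2*n) (\<lambda>(r,c).
     if (odd c \<and> r + 1 = c) \<or> (even c \<and> r = c + 1) then U $$ (r,c) - 1 else U $$ (r,c))"

end

theory Submission
  imports Defs "Jordan_Normal_Form.Matrix_Kernel"
begin

text \<open>With \<open>w = 2\<pi>m/l\<^sub>0\<close>, put \<open>f\<^sub>j(x) = A\<^sub>j cos(wx) + (C\<^sub>j/w) sin(wx)\<close> on the loops \<open>j < n\<close> and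
  \<open>f\<^sub>j = 0\<close> elsewhere. As \<open>w l\<^sub>j \<in> 2\<pi>\<int>\<close> for \<open>j < n\<close>, both ends of loop \<open>j\<close> see the value \<open>A\<^sub>j\<close>
  and the outward derivatives \<open>\<plusminus>C\<^sub>j\<close>, so \<open>\<Psi> + i\<Psi>'\<close> has the entries \<open>g\<^sub>2\<^sub>j = A\<^sub>j + iC\<^sub>j\<close>,
  \<open>g\<^sub>2\<^sub>j\<^sub>+\<^sub>1 = A\<^sub>j - iC\<^sub>j\<close> and \<open>\<Psi> - i\<Psi>'\<close> is the same vector with the two ends of every loop
  exchanged. The vertex condition \<open>(U - I)\<Psi> + i(U + I)\<Psi>' = U(\<Psi> + i\<Psi>') - (\<Psi> - i\<Psi>') = 0\<close> therefore
  says exactly that \<open>g\<close> lies in the kernel of \<open>M\<^sub>e\<^sub>v\<^sub>e\<^sub>n\<close>, and by rank-nullity a basis of this kernel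
  gives \<open>2n - rank M\<^sub>e\<^sub>v\<^sub>e\<^sub>n\<close> linearly independent eigenfunctions for \<open>w\<^sup>2\<close>.\<close>

no_notation vec_nth (infixl \<open>$\<close> 90)

lemma mat_rank_nullity:
  fixes A :: "'a::field mat"
  assumes A: "A \<in> carrier_mat nr nc"
  shows "vec_space.rank nr A + kernel_dim A = nc"
proof -
  interpret K: kernel nr nc A by unfold_locales (rule A)
  interpret NR: vec_space "TYPE('a)" nr .
  interpret L: linear_map class_ring "module_vec TYPE('a) nc" "module_vec TYPE('a) nr" "(*\<^sub>v) A"
  proof (intro linear_map.intro mod_hom.intro K.NC.vectorspace_axioms NR.vectorspace_axioms
      K.NC.module_axioms NR.module_axioms)
    show "mod_hom_axioms class_ring (module_vec TYPE('a) nc) (module_vec TYPE('a) nr) ((*\<^sub>v) A)"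
      unfolding mod_hom_axioms_def module_hom_def
      using A by (auto simp: module_vec_simps mult_add_distrib_mat_vec mult_mat_vec)
  qed
  have "L.kerT = mat_kernel A"
    unfolding mod_hom.ker_def[OF L.mod_hom_axioms] mat_kernel_def using A
    by (auto simp: module_vec_simps)
  moreover have "NR.span (set (cols A)) = {y \<in> carrier_vec nr. \<exists>x\<in>carrier_vec nc. A *\<^sub>v x = y}"
    using NR.col_space_eq[OF A] A unfolding NR.col_space_def by simp
  then have "L.imT = NR.span (set (cols A))"
    unfolding mod_hom.im_def[OF L.mod_hom_axioms] using A by (auto simp: module_vec_simps)
  ultimately show ?thesis
    using L.rank_nullity K.NC.fin_dim K.NC.dim_is_n A
    by (simp add: NR.rank_def kernel_dim_def)
qed

lemma mat_kernel_indpt_family: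
  fixes A :: "'a::field mat"
  assumes A: "A \<in> carrier_mat nr nc"
  obtains b :: "nat \<Rightarrow> 'a vec" where "\<And>i. i < kernel_dim A \<Longrightarrow> b i \<in> mat_kernel A"
    and "\<And>c i. (\<And>r. r < nc \<Longrightarrow> (\<Sum>i<kernel_dim A. c i * b i $ r) = 0) \<Longrightarrow> i < kernel_dim A \<Longrightarrow> c i = 0"
proof -
  interpret K: kernel nr nc A by unfold_locales (rule A)
  obtain B where fin: "finite B" and basis: "K.basis B" using kernel_basis_exists[OF A] by blast
  have BK: "B \<subseteq> mat_kernel A" using basis unfolding K.Ker.basis_def by auto
  have BV: "B \<subseteq> carrier_vec nc" using BK A by (auto simp: mat_kernel_def)
  have indpt: "K.NC.lin_indpt B" using basis K.lindep_same[OF BK] unfolding K.Ker.basis_def by auto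
  define k where "k = kernel_dim A"
  have "card B = k" using K.Ker.dim_basis[OF fin basis] by (simp add: k_def)
  then obtain b where bij: "bij_betw b {..<k} B" using ex_bij_betw_nat_finite[OF fin] by (metis atLeast0LessThan)
  show thesis
  proof (rule that[of b, folded k_def])
    fix i assume "i < k"
    then show "b i \<in> mat_kernel A" using bij BK by (auto simp: bij_betw_def)
  next
    fix c :: "nat \<Rightarrow> 'a" and i
    assume zero: "\<And>r. r < nc \<Longrightarrow> (\<Sum>i<k. c i * b i $ r) = 0" and i: "i < k"
    define a where "a v = c (inv_into {..<k} b v)" for v
    have "K.NC.lincomb a B = 0\<^sub>v nc"
    proof (rule eq_vecI)
      fix r assume "r < dim_vec (0\<^sub>v nc :: 'a vec)"
      then have r: "r < nc" by simp
      have "K.NC.lincomb a B $ r = (\<Sum>v\<in>B. a v * v $ r)" by (rule K.NC.lincomb_index[OF r BV])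
      also have "\<dots> = (\<Sum>i<k. a (b i) * b i $ r)" by (rule sum.reindex_bij_betw[OF bij, symmetric])
      also have "\<dots> = (\<Sum>i<k. c i * b i $ r)"
        using bij by (auto simp: a_def bij_betw_def intro!: sum.cong)
      finally show "K.NC.lincomb a B $ r = 0\<^sub>v nc $ r" using zero r by simp
    qed (use K.NC.lincomb_closed[OF BV] in \<open>simp add: module_vec_simps\<close>)
    moreover have "b i \<in> B" using bij i by (auto simp: bij_betw_def)
    ultimately have "a (b i) = 0"
      using indpt fin unfolding K.NC.lin_dep_def by (fastforce simp: module_vec_simps)
    then show "c i = 0" using bij i by (auto simp: a_def bij_betw_def)
  qed
qed

text \<open>\<open>A j\<close> and \<open>C j\<close> are the value and the slope at \<open>0\<close> on loop \<open>j < n\<close>; the wave vanishes on the other edges.\<close>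

definition loop_wave :: "nat \<Rightarrow> real \<Rightarrow> (nat \<Rightarrow> complex) \<Rightarrow> (nat \<Rightarrow> complex) \<Rightarrow> nat \<Rightarrow> real \<Rightarrow> complex" where
  "loop_wave n w A C j x = (if j < n then A j * cos (w * x) + C j / w * sin (w * x) else 0)"

lemma loop_wave_has_vector_derivative:
  assumes "w \<noteq> 0"
  shows "(loop_wave n w A C j has_vector_derivative loop_wave n w C (\<lambda>j. - (complex_of_real (w\<^sup>2) * A j)) j x) (at x within S)"
proof (cases "j < n")
  case True
  have "((\<lambda>x. A j * cos (w * x) + C j / w * sin (w * x)) has_vector_derivative
      A j * (- sin (w * x) * w) + C j / w * (cos (w * x) * w)) (at x within S)"
    by (intro has_vector_derivative_add has_vector_derivative_mult_right has_vector_derivative_of_real)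
      (auto intro!: derivative_eq_intros)
  then show ?thesis
    using True assms unfolding loop_wave_def[abs_def]
    by (simp add: field_simps power2_eq_square)
qed (simp add: loop_wave_def[abs_def])

lemma loop_wave_second_derivative:
  "loop_wave n w (\<lambda>j. - (complex_of_real (w\<^sup>2) * A j)) (\<lambda>j. - (complex_of_real (w\<^sup>2) * C j)) j x = - (complex_of_real (w\<^sup>2) * loop_wave n w A C j x)"
  by (simp add: loop_wave_def algebra_simps)

lemma sum_loop_wave:
  "(\<Sum>i\<in>I. c i * loop_wave n w (A i) (C i) j x) =
     loop_wave n w (\<lambda>j. \<Sum>i\<in>I. c i * A i j) (\<lambda>j. \<Sum>i\<in>I. c i * C i j) j x"
proof (cases "j < n")
  case True
  have "(\<Sum>i\<in>I. c i * loop_wave n w (A i) (C i) j x) =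
      (\<Sum>i\<in>I. c i * A i j * cos (w * x) + c i * C i j / w * sin (w * x))"
    using True by (intro sum.cong) (simp_all add: loop_wave_def algebra_simps)
  also have "\<dots> = loop_wave n w (\<lambda>j. \<Sum>i\<in>I. c i * A i j) (\<lambda>j. \<Sum>i\<in>I. c i * C i j) j x"
    using True by (simp only: loop_wave_def if_True sum.distrib sum_distrib_right sum_divide_distrib)
  finally show ?thesis .
qed (simp add: loop_wave_def)

lemma loop_wave_coeffs_eq_0:
  assumes "w > 0" and "j < n"
    and "loop_wave n w A C j 0 = 0" and "loop_wave n w A C j (pi / (2 * w)) = 0"
  shows "A j = 0" and "C j = 0"
proof -
  have "w * (pi / (2 * w)) = pi / 2" using assms(1) by simp
  then show "A j = 0" and "C j = 0"
    using assms by (simp_all add: loop_wave_def)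
qed

definition edge_value :: "(nat \<Rightarrow> complex) \<Rightarrow> nat \<Rightarrow> complex" where
  "edge_value g j = (g (2 * j) + g (2 * j + 1)) / 2"

definition edge_slope :: "(nat \<Rightarrow> complex) \<Rightarrow> nat \<Rightarrow> complex" where
  "edge_slope g j = (g (2 * j) - g (2 * j + 1)) / (2 * \<i>)"

lemma edge_value_plus_slope: "edge_value g j + \<i> * edge_slope g j = g (2 * j)"
  by (simp add: edge_value_def edge_slope_def field_simps)

lemma edge_value_minus_slope: "edge_value g j - \<i> * edge_slope g j = g (2 * j + 1)"
  by (simp add: edge_value_def edge_slope_def field_simps)

lemma edge_value_sum: "edge_value (\<lambda>r. \<Sum>i\<in>I. c i * g i r) j = (\<Sum>i\<in>I. c i * edge_value (g i) j)"
proof -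
  have "edge_value (\<lambda>r. \<Sum>i\<in>I. c i * g i r) j = (\<Sum>i\<in>I. (c i * g i (2 * j) + c i * g i (2 * j + 1)) / 2)"
    unfolding edge_value_def by (simp only: sum.distrib[symmetric] sum_divide_distrib)
  also have "\<dots> = (\<Sum>i\<in>I. c i * edge_value (g i) j)"
    unfolding edge_value_def by (intro sum.cong) (simp_all add: algebra_simps)
  finally show ?thesis .
qed

lemma edge_slope_sum: "edge_slope (\<lambda>r. \<Sum>i\<in>I. c i * g i r) j = (\<Sum>i\<in>I. c i * edge_slope (g i) j)"
proof -
  have "edge_slope (\<lambda>r. \<Sum>i\<in>I. c i * g i r) j = (\<Sum>i\<in>I. (c i * g i (2 * j) - c i * g i (2 * j + 1)) / (2 * \<i>))"
    unfolding edge_slope_def by (simp only: sum_subtractf[symmetric] sum_divide_distrib)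
  also have "\<dots> = (\<Sum>i\<in>I. c i * edge_slope (g i) j)"
    unfolding edge_slope_def by (intro sum.cong) (simp_all add: algebra_simps)
  finally show ?thesis .
qed

definition other_end :: "nat \<Rightarrow> nat" where
  "other_end r = (if even r then r + 1 else r - 1)"

lemma loop_wave_boundary:
  fixes N :: nat and g B :: "nat \<Rightarrow> complex"
  assumes "\<forall>j<n. cos (w * l j) = 1 \<and> sin (w * l j) = 0"
  defines "\<Psi> \<equiv> bvals N l (loop_wave n w (edge_value g) (edge_slope g))"
    and "\<Psi>' \<equiv> bders N l (loop_wave n w (edge_slope g) B)"
  shows "\<Psi> + \<i> \<cdot>\<^sub>v \<Psi>' = vec (2 * N) (\<lambda>r. if r < 2 * n then g r else 0)"
    and "\<Psi> - \<i> \<cdot>\<^sub>v \<Psi>' = vec (2 * N) (\<lambda>r. if r < 2 * n then g (other_end r) else 0)"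
proof -
  have ends: "loop_wave n w A C (r div 2) 0 = (if r < 2 * n then A (r div 2) else 0)"
    "loop_wave n w A C (r div 2) (l (r div 2)) = (if r < 2 * n then A (r div 2) else 0)" for A C r
    using assms(1) by (auto simp: loop_wave_def)
  have index: "(\<Psi> + s \<cdot>\<^sub>v \<Psi>') $ r = (if r < 2 * n then
      if even r then edge_value g (r div 2) + s * edge_slope g (r div 2)
      else edge_value g (r div 2) - s * edge_slope g (r div 2) else 0)" if "r < 2 * N" for r s
    using that unfolding \<Psi>_def \<Psi>'_def bvals_def bders_def ends by simp
  have split: "r = 2 * (r div 2) \<and> even r \<or> r = 2 * (r div 2) + 1 \<and> odd r" for r :: nat
    by presburger
  have "(\<Psi> + \<i> \<cdot>\<^sub>v \<Psi>') $ r = (if r < 2 * n then g r else 0)" if "r < 2 * N" for r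
    using index[OF that, of \<i>] split[of r] edge_value_plus_slope[of g "r div 2"]
      edge_value_minus_slope[of g "r div 2"] by auto
  then show "\<Psi> + \<i> \<cdot>\<^sub>v \<Psi>' = vec (2 * N) (\<lambda>r. if r < 2 * n then g r else 0)"
    by (intro eq_vecI) (simp_all add: \<Psi>_def \<Psi>'_def bvals_def bders_def)
  have "(\<Psi> - \<i> \<cdot>\<^sub>v \<Psi>') $ r = (if r < 2 * n then g (other_end r) else 0)" if "r < 2 * N" for r
    using index[OF that, of "- \<i>"] split[of r] edge_value_plus_slope[of g "r div 2"]
      edge_value_minus_slope[of g "r div 2"] that
    by (auto simp: other_end_def \<Psi>_def \<Psi>'_def bvals_def bders_def)
  then show "\<Psi> - \<i> \<cdot>\<^sub>v \<Psi>' = vec (2 * N) (\<lambda>r. if r < 2 * n then g (other_end r) else 0)"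
    by (intro eq_vecI) (simp_all add: \<Psi>_def \<Psi>'_def bvals_def bders_def)
qed

lemma vertex_condition_split:
  assumes "U \<in> carrier_mat m m" and "\<Psi> \<in> carrier_vec m" and "\<Psi>' \<in> carrier_vec m"
  shows "(U - 1\<^sub>m m) *\<^sub>v \<Psi> + \<i> \<cdot>\<^sub>v ((U + 1\<^sub>m m) *\<^sub>v \<Psi>') = U *\<^sub>v (\<Psi> + \<i> \<cdot>\<^sub>v \<Psi>') - (\<Psi> - \<i> \<cdot>\<^sub>v \<Psi>')"
  using assms
  by (simp add: add_mult_distrib_mat_vec minus_mult_distrib_mat_vec mult_add_distrib_mat_vec
      mult_mat_vec smult_add_distrib_vec) (rule eq_vecI; simp add: algebra_simps)

lemma M_even_index:
  assumes "r < 2 * N" and "c < 2 * n"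
  shows "M_even N n U $$ (r, c) = U $$ (r, c) - (if r = other_end c then 1 else 0)"
proof -
  have "((odd c \<and> r + 1 = c) \<or> (even c \<and> r = c + 1)) = (r = other_end c)"
    unfolding other_end_def by presburger
  then show ?thesis using assms by (simp add: M_even_def)
qed

lemma M_even_mult_vec:
  assumes U: "U \<in> carrier_mat (2 * N) (2 * N)" and "n \<le> N"
  shows "M_even N n U *\<^sub>v vec (2 * n) g =
    U *\<^sub>v vec (2 * N) (\<lambda>r. if r < 2 * n then g r else 0) - vec (2 * N) (\<lambda>r. if r < 2 * n then g (other_end r) else 0)"
proof (rule eq_vecI)
  fix r assume "r < dim_vec (U *\<^sub>v vec (2 * N) (\<lambda>r. if r < 2 * n then g r else 0)
    - vec (2 * N) (\<lambda>r. if r < 2 * n then g (other_end r) else 0))"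
  then have r: "r < 2 * N" using U by simp
  have other_end_sum: "(\<Sum>c<2 * n. if r = other_end c then g c else 0) = (if r < 2 * n then g (other_end r) else 0)"
  proof -
    have "(r = other_end c) = (c = other_end r)" for c by (auto simp: other_end_def)
    moreover have "(other_end r < 2 * n) = (r < 2 * n)" unfolding other_end_def by presburger
    ultimately show ?thesis by simp
  qed
  have "(M_even N n U *\<^sub>v vec (2 * n) g) $ r = (\<Sum>c<2 * n. M_even N n U $$ (r, c) * g c)"
    using r by (simp add: M_even_def scalar_prod_def lessThan_atLeast0 mult.commute)
  also have "\<dots> = (\<Sum>c<2 * n. U $$ (r, c) * g c - (if r = other_end c then g c else 0))"
    using r by (intro sum.cong) (simp_all add: M_even_index algebra_simps)
  also have "\<dots> = (\<Sum>c<2 * n. U $$ (r, c) * g c) - (if r < 2 * n then g (other_end r) else 0)"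
    by (simp add: sum_subtractf other_end_sum)
  also have "(\<Sum>c<2 * n. U $$ (r, c) * g c) = (\<Sum>c<2 * N. U $$ (r, c) * (if c < 2 * n then g c else 0))"
    using assms(2) by (intro sum.mono_neutral_cong_left) auto
  finally show "(M_even N n U *\<^sub>v vec (2 * n) g) $ r = (U *\<^sub>v vec (2 * N) (\<lambda>r. if r < 2 * n then g r else 0)
    - vec (2 * N) (\<lambda>r. if r < 2 * n then g (other_end r) else 0)) $ r"
    using r U by (simp add: scalar_prod_def lessThan_atLeast0)
qed (use U in \<open>simp add: M_even_def\<close>)

lemma loop_wave_is_eigenfunction:
  assumes w: "w \<noteq> 0" and "n \<le> N" and U: "U \<in> carrier_mat (2 * N) (2 * N)"
    and periodic: "\<forall>j<n. cos (w * l j) = 1 \<and> sin (w * l j) = 0"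
    and kernel: "M_even N n U *\<^sub>v vec (2 * n) g = 0\<^sub>v (2 * N)"
  shows "is_eigenfunction N l U (w\<^sup>2) (loop_wave n w (edge_value g) (edge_slope g))"
proof -
  let ?f = "loop_wave n w (edge_value g) (edge_slope g)"
  let ?f' = "loop_wave n w (edge_slope g) (\<lambda>j. - (complex_of_real (w\<^sup>2) * edge_value g j))"
  let ?f'' = "loop_wave n w (\<lambda>j. - (complex_of_real (w\<^sup>2) * edge_value g j)) (\<lambda>j. - (complex_of_real (w\<^sup>2) * edge_slope g j))"
  have "(?f j has_vector_derivative ?f' j x) (at x within S)"
    and "(?f' j has_vector_derivative ?f'' j x) (at x within S)" for j x S
    using loop_wave_has_vector_derivative[OF w] by blast+
  moreover have "- ?f'' j x = complex_of_real (w\<^sup>2) * ?f j x" for j x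
    by (simp only: loop_wave_second_derivative minus_minus)
  moreover have "(U - 1\<^sub>m (2 * N)) *\<^sub>v bvals N l ?f + \<i> \<cdot>\<^sub>v ((U + 1\<^sub>m (2 * N)) *\<^sub>v bders N l ?f') = 0\<^sub>v (2 * N)"
    using vertex_condition_split[OF U, of "bvals N l ?f" "bders N l ?f'"]
      loop_wave_boundary[OF periodic] M_even_mult_vec[OF U \<open>n \<le> N\<close>] kernel
    by (simp add: bvals_def bders_def)
  ultimately show ?thesis unfolding is_eigenfunction_def by blast
qed

lemma multiplicity_ge_kernel_dim_M_even:
  assumes w: "w > 0" and "n \<le> N" and U: "U \<in> carrier_mat (2 * N) (2 * N)"
    and periodic: "\<forall>j<n. cos (w * l j) = 1 \<and> sin (w * l j) = 0"
    and long: "\<forall>j<n. pi / (2 * w) \<le> l j"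
  shows "multiplicity_ge N l U (w\<^sup>2) (kernel_dim (M_even N n U))"
proof -
  define k where "k = kernel_dim (M_even N n U)"
  have "M_even N n U \<in> carrier_mat (2 * N) (2 * n)" by (simp add: M_even_def)
  then obtain b where kernel: "\<And>i. i < k \<Longrightarrow> b i \<in> mat_kernel (M_even N n U)"
    and indpt: "\<And>c i. (\<And>r. r < 2 * n \<Longrightarrow> (\<Sum>i<k. c i * b i $ r) = 0) \<Longrightarrow> i < k \<Longrightarrow> c i = 0"
    unfolding k_def by (blast intro: mat_kernel_indpt_family)
  define \<phi> where "\<phi> i = loop_wave n w (edge_value (($) (b i))) (edge_slope (($) (b i)))" for i
  have "is_eigenfunction N l U (w\<^sup>2) (\<phi> i)" if "i < k" for i
  proof -
    have "b i \<in> carrier_vec (2 * n)" and "M_even N n U *\<^sub>v b i = 0\<^sub>v (2 * N)"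
      using kernel that by (auto simp: mat_kernel_def M_even_def)
    moreover from this(1) have "vec (2 * n) (($) (b i)) = b i" by (intro eq_vecI) auto
    ultimately have "M_even N n U *\<^sub>v vec (2 * n) (($) (b i)) = 0\<^sub>v (2 * N)" by simp
    then show ?thesis
      unfolding \<phi>_def using loop_wave_is_eigenfunction[OF _ \<open>n \<le> N\<close> U periodic] w by simp
  qed
  moreover have "\<forall>i<k. c i = 0" if zero: "is_zero_on_graph N l (\<lambda>j x. \<Sum>i<k. c i * \<phi> i j x)" for c
  proof -
    define s where "s r = (\<Sum>i<k. c i * b i $ r)" for r
    have "(\<Sum>i<k. c i * \<phi> i j x) = loop_wave n w (edge_value s) (edge_slope s) j x" for j x
      unfolding \<phi>_def s_def sum_loop_wave edge_value_sum[where g = "\<lambda>i. ($) (b i)"]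
        edge_slope_sum[where g = "\<lambda>i. ($) (b i)"] ..
    then have vanish: "loop_wave n w (edge_value s) (edge_slope s) j x = 0" if "j < N" "x \<in> {0..l j}" for j x
      using zero that unfolding is_zero_on_graph_def by simp
    have edge: "s (2 * j) = 0 \<and> s (2 * j + 1) = 0" if j: "j < n" for j
    proof -
      have "0 \<le> pi / (2 * w)" using w by simp
      then have "loop_wave n w (edge_value s) (edge_slope s) j 0 = 0"
        and "loop_wave n w (edge_value s) (edge_slope s) j (pi / (2 * w)) = 0"
        using vanish j long \<open>n \<le> N\<close> by auto
      then have "edge_value s j = 0" and "edge_slope s j = 0"
        using loop_wave_coeffs_eq_0[OF w j] by auto
      then show ?thesis using edge_value_plus_slope[of s j] edge_value_minus_slope[of s j] by simp
    qed
    have "s r = 0" if "r < 2 * n" for r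
    proof -
      have "r = 2 * (r div 2) \<or> r = 2 * (r div 2) + 1" by presburger
      then show ?thesis using edge[of "r div 2"] that by auto
    qed
    then show ?thesis using indpt unfolding s_def by blast
  qed
  ultimately show ?thesis unfolding multiplicity_ge_def k_def by blast
qed

lemma multiplicity_ge_imp_is_eigenvalue:
  assumes "multiplicity_ge N l U \<epsilon> k" and "k > 0"
  shows "is_eigenvalue N l U \<epsilon>"
proof -
  obtain \<phi> where eig: "\<forall>i<k. is_eigenfunction N l U \<epsilon> (\<phi> i)"
    and indpt: "\<forall>c. is_zero_on_graph N l (\<lambda>j x. \<Sum>i<k. c i * \<phi> i j x) \<longrightarrow> (\<forall>i<k. c i = 0)"
    using assms(1) unfolding multiplicity_ge_def by blast
  define \<delta> :: "nat \<Rightarrow> complex" where "\<delta> i = (if i = 0 then 1 else 0)" for i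
  have comb: "(\<lambda>j x. \<Sum>i<k. \<delta> i * \<phi> i j x) = \<phi> 0"
  proof (intro ext)
    fix j x
    have "(\<Sum>i<k. \<delta> i * \<phi> i j x) = (\<Sum>i<k. if i = 0 then \<phi> 0 j x else 0)"
      by (intro sum.cong) (auto simp: \<delta>_def)
    then show "(\<Sum>i<k. \<delta> i * \<phi> i j x) = \<phi> 0 j x" using assms(2) by simp
  qed
  have "\<not> is_zero_on_graph N l (\<phi> 0)"
  proof
    assume "is_zero_on_graph N l (\<phi> 0)"
    then have "\<forall>i<k. \<delta> i = 0" using indpt unfolding comb[symmetric] by blast
    then have "\<delta> 0 = 0" using assms(2) by blast
    then show False by (simp add: \<delta>_def)
  qed
  then show ?thesis using eig assms(2) unfolding is_eigenvalue_def by blast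
qed

lemma commensurable_loop:
  assumes "l0 > 0" and "m \<ge> 1" and "l = real p * l0" and "l > 0"
  defines "w \<equiv> 2 * real m * pi / l0"
  shows "cos (w * l) = 1" and "sin (w * l) = 0" and "pi / (2 * w) \<le> l"
proof -
  have "w * l = 2 * real (m * p) * pi" using assms(1,3) by (simp add: w_def)
  then show "cos (w * l) = 1" and "sin (w * l) = 0" by (metis cos_2npi, metis sin_2npi)
  have "p \<ge> 1" using assms(3,4) by (cases p) auto
  have "pi / (2 * w) = l0 / (4 * real m)" using assms(1) by (simp add: w_def field_simps)
  also have "\<dots> \<le> l0" using assms(1,2) by (simp add: field_simps)
  also have "\<dots> \<le> l" using assms(1,3) \<open>p \<ge> 1\<close> by simp
  finally show "pi / (2 * w) \<le> l" .
qed

theorem theorem1: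
  fixes N n :: nat and l :: "nat \<Rightarrow> real" and U :: "complex mat" and l0 :: real
  assumes "1 \<le> n" and "n \<le> N"
    and "\<forall>j<N. l j > 0"
    and "U \<in> carrier_mat (2*N) (2*N)" and "unitary_mat U"
    and "l0 > 0" and "\<forall>j<n. \<exists>p::nat. l j = real p * l0"
    and "vec_space.rank (2*N) (M_even N n U) < 2*n"
  shows "\<forall>m::nat. m \<ge> 1 \<longrightarrow>
           is_eigenvalue N l U (4 * (real m)^2 * pi^2 / l0^2) \<and>
           multiplicity_ge N l U (4 * (real m)^2 * pi^2 / l0^2)
             (2*n - vec_space.rank (2*N) (M_even N n U))"
proof (intro allI impI)
  fix m :: nat assume "m \<ge> 1"
  define w where "w = 2 * real m * pi / l0"
  have "w > 0" using \<open>m \<ge> 1\<close> assms(6) by (simp add: w_def)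
  have "cos (w * l j) = 1 \<and> sin (w * l j) = 0" and "pi / (2 * w) \<le> l j" if "j < n" for j
    using commensurable_loop[OF assms(6) \<open>m \<ge> 1\<close>] assms(2,3,7) that unfolding w_def
    by (metis order.strict_trans2)+
  then have "multiplicity_ge N l U (w\<^sup>2) (kernel_dim (M_even N n U))"
    using multiplicity_ge_kernel_dim_M_even[OF \<open>w > 0\<close> assms(2,4)] by blast
  moreover have "kernel_dim (M_even N n U) = 2 * n - vec_space.rank (2 * N) (M_even N n U)"
    using mat_rank_nullity[of "M_even N n U" "2 * N" "2 * n"] by (simp add: M_even_def)
  moreover have "4 * (real m)^2 * pi^2 / l0^2 = w\<^sup>2" by (simp add: w_def power2_eq_square)
  ultimately show "is_eigenvalue N l U (4 * (real m)^2 * pi^2 / l0^2) \<and>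
      multiplicity_ge N l U (4 * (real m)^2 * pi^2 / l0^2) (2*n - vec_space.rank (2*N) (M_even N n U))"
    using multiplicity_ge_imp_is_eigenvalue assms(8) by auto
qed

end
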